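(* Let $K$ be a field of characteristic $p>0$, $s\geq1$ an integer, $n=1+p^s$, let $X$ be the $n\times n$ matrix with $1$'s in positions $(i,i+1)$, $1\leq i\leq n-1$, and $0$ elsewhere, and let $K[X]$ be the $K$-subalgebra of $\mathrm{Mat}_n(K)$ generated by $X$. Then every $K$-algebra automorphism $\varphi$ of $K[X]$ is induced by conjugation with some upper triangular matrix $A\in\mathrm{GL}_n(K)$, i.e. $\varphi(Y)=AYA^{-1}$ for all $Y\in K[X]$. For a given $\varphi$ there is a unique such $A$ whose last column has only zero entries except for a $1$ in position $(n,n)$. Any other matrix inducing $\varphi$ has the form $AC$ for some unit $C$ of $K[X]$. *)

theory Defs
  imports "Jordan_Normal_Form.Matrix"
begin

definition shift_mat :: "nat \<Rightarrow> 'a::field mat" where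
  "shift_mat n = mat n n (\<lambda>(i,j). if j = i + 1 then 1 else 0)"

inductive_set KX :: "nat \<Rightarrow> 'a::field mat set" for n :: nat where
  gen: "shift_mat n \<in> KX n"
| one: "1\<^sub>m n \<in> KX n"
| add: "Y \<in> KX n \<Longrightarrow> Z \<in> KX n \<Longrightarrow> Y + Z \<in> KX n"
| smult: "Y \<in> KX n \<Longrightarrow> c \<cdot>\<^sub>m Y \<in> KX n"
| mult: "Y \<in> KX n \<Longrightarrow> Z \<in> KX n \<Longrightarrow> Y * Z \<in> KX n"

definition KX_automorphism :: "nat \<Rightarrow> ('a::field mat \<Rightarrow> 'a mat) \<Rightarrow> bool" where
  "KX_automorphism n \<phi> \<longleftrightarrow>
     bij_betw \<phi> (KX n) (KX n) \<and>
     (\<forall>Y\<in>KX n. \<forall>Z\<in>KX n. \<phi> (Y + Z) = \<phi> Y + \<phi> Z) \<and>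
     (\<forall>c. \<forall>Y\<in>KX n. \<phi> (c \<cdot>\<^sub>m Y) = c \<cdot>\<^sub>m \<phi> Y) \<and>
     (\<forall>Y\<in>KX n. \<forall>Z\<in>KX n. \<phi> (Y * Z) = \<phi> Y * \<phi> Z) \<and>
     \<phi> (1\<^sub>m n) = 1\<^sub>m n"

definition induces_by_conj :: "nat \<Rightarrow> ('a::field mat \<Rightarrow> 'a mat) \<Rightarrow> 'a mat \<Rightarrow> bool" where
  "induces_by_conj n \<phi> A \<longleftrightarrow>
     A \<in> carrier_mat n n \<and> invertible_mat A \<and>
     (\<exists>B \<in> carrier_mat n n. A * B = 1\<^sub>m n \<and> B * A = 1\<^sub>m n \<and>
        (\<forall>Y\<in>KX n. \<phi> Y = A * Y * B))"

definition KX_unit :: "nat \<Rightarrow> 'a::field mat \<Rightarrow> bool" where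
  "KX_unit n C \<longleftrightarrow> C \<in> KX n \<and> (\<exists>D\<in>KX n. C * D = 1\<^sub>m n \<and> D * C = 1\<^sub>m n)"

end

theory Submission
  imports Defs "Jordan_Normal_Form.Determinant"
begin

text \<open>\<open>K[X]\<close> is the centralizer of \<open>X\<close>: the upper triangular Toeplitz matrices, each
  determined by its first row, multiplying like truncated power series. An automorphism \<open>\<phi>\<close>
  sends \<open>X\<close> to some \<open>Y\<close> of the same shape, \<open>Y = c X + (higher powers)\<close> with
  \<open>c \<noteq> 0\<close>. The matrix whose columns are \<open>Y\<^sup>n\<^sup>-\<^sup>1\<^sup>-\<^sup>j e\<^sub>n\<^sub>-\<^sub>1\<close> is then upper
  triangular with diagonal entries powers of \<open>c\<close>, and it conjugates \<open>X\<close> to \<open>Y\<close>, hence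
  induces \<open>\<phi>\<close> on all of \<open>K[X]\<close>. Two matrices inducing \<open>\<phi>\<close> differ by a matrix commuting
  with \<open>X\<close>, i.e. by a unit of \<open>K[X]\<close>.\<close>

lemma mult_carrier_mat_square [simp]:
  "A \<in> carrier_mat n n \<Longrightarrow> B \<in> carrier_mat n n \<Longrightarrow> A * B \<in> carrier_mat n n"
  by simp

lemma pow_mat_Suc_left:
  assumes "A \<in> carrier_mat n n"
  shows "A * A ^\<^sub>m k = A ^\<^sub>m Suc k"
proof (induction k)
  case 0
  then show ?case using assms by simp
next
  case (Suc k)
  have "A * A ^\<^sub>m Suc k = (A * A ^\<^sub>m k) * A"
    using assms by (simp add: assoc_mult_mat[of _ n n _ n _ n])
  then show ?case
    using Suc by simp
qed

lemma shift_mat_carrier [simp]: "shift_mat n \<in> carrier_mat n n"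
  unfolding shift_mat_def by auto

lemma dim_shift_mat [simp]: "dim_row (shift_mat n) = n" "dim_col (shift_mat n) = n"
  unfolding shift_mat_def by auto

lemma index_shift_mat:
  "i < n \<Longrightarrow> j < n \<Longrightarrow> shift_mat n $$ (i, j) = (if j = i + 1 then 1 else 0)"
  unfolding shift_mat_def by auto

lemma index_mult_shift_mat_right:
  assumes A: "A \<in> carrier_mat n n" and i: "i < n" and j: "j < n"
  shows "(A * shift_mat n) $$ (i, j) = (if j = 0 then 0 else A $$ (i, j - 1))"
proof -
  have "(A * shift_mat n) $$ (i, j) = (\<Sum>k\<in>{0..<n}. A $$ (i, k) * (if j = k + 1 then 1 else 0))"
    using A i j by (simp add: scalar_prod_def index_shift_mat)
  also have "\<dots> = (\<Sum>k\<in>{0..<n}. if k = j - 1 \<and> j \<noteq> 0 then A $$ (i, k) else 0)"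
    by (rule sum.cong) auto
  finally show ?thesis
    using j by auto
qed

lemma index_mult_shift_mat_left:
  assumes A: "A \<in> carrier_mat n n" and i: "i < n" and j: "j < n"
  shows "(shift_mat n * A) $$ (i, j) = (if i + 1 < n then A $$ (i + 1, j) else 0)"
proof -
  have "(shift_mat n * A) $$ (i, j) = (\<Sum>k\<in>{0..<n}. (if k = i + 1 then 1 else 0) * A $$ (k, j))"
    using A i j by (simp add: scalar_prod_def index_shift_mat)
  also have "\<dots> = (\<Sum>k\<in>{0..<n}. if k = i + 1 then A $$ (k, j) else 0)"
    by (rule sum.cong) auto
  finally show ?thesis
    by auto
qed

lemma dim_shift_mat_pow [simp]:
  "dim_row (shift_mat n ^\<^sub>m d) = n" "dim_col (shift_mat n ^\<^sub>m d) = n"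
  by auto

lemma index_shift_mat_pow:
  "i < n \<Longrightarrow> j < n \<Longrightarrow> (shift_mat n ^\<^sub>m d) $$ (i, j) = (if j = i + d then 1 else (0::'a::field))"
proof (induction d arbitrary: j)
  case 0
  then show ?case by simp
next
  case (Suc d)
  have "(shift_mat n ^\<^sub>m Suc d) $$ (i, j)
      = (if j = 0 then 0 else ((shift_mat n :: 'a mat) ^\<^sub>m d) $$ (i, j - 1))"
    using index_mult_shift_mat_right[of "shift_mat n ^\<^sub>m d" n i j] Suc.prems by simp
  then show ?case
    using Suc by (cases j) auto
qed

subsection \<open>\<open>K[X]\<close> as the centralizer of the shift\<close>

lemma KX_carrier: "Y \<in> KX n \<Longrightarrow> Y \<in> carrier_mat n n"
  by (induction rule: KX.induct) auto

lemma KX_commutes_shift_mat: "Y \<in> KX n \<Longrightarrow> Y * shift_mat n = shift_mat n * Y"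
proof (induction rule: KX.induct)
  case gen
  then show ?case by simp
next
  case one
  then show ?case by (metis left_mult_one_mat right_mult_one_mat shift_mat_carrier)
next
  case (add Y Z)
  then show ?case
    using KX_carrier[OF add.hyps(1)] KX_carrier[OF add.hyps(2)]
    by (simp add: add_mult_distrib_mat[of Y n n Z "shift_mat n" n]
        mult_add_distrib_mat[of "shift_mat n" n n Y n Z])
next
  case (smult Y c)
  then show ?case
    using KX_carrier[OF smult.hyps]
    by (simp add: mult_smult_assoc_mat[of Y n n "shift_mat n" n c]
        mult_smult_distrib[of "shift_mat n" n n Y n c])
next
  case (mult Y Z)
  have Y: "Y \<in> carrier_mat n n" and Z: "Z \<in> carrier_mat n n"
    using KX_carrier mult.hyps by auto
  have "Y * Z * shift_mat n = Y * shift_mat n * Z"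
    using assoc_mult_mat[OF Y Z shift_mat_carrier] assoc_mult_mat[OF Y shift_mat_carrier Z] mult.IH
    by simp
  also have "\<dots> = shift_mat n * (Y * Z)"
    using assoc_mult_mat[OF shift_mat_carrier Y Z] mult.IH by simp
  finally show ?case .
qed

lemma KX_pow: "Y \<in> KX n \<Longrightarrow> Y ^\<^sub>m k \<in> KX n"
proof (induction k)
  case 0
  then show ?case using KX_carrier[OF 0] KX.one by simp
next
  case (Suc k)
  then show ?case by (simp add: KX.mult)
qed

definition toeplitz_mat :: "nat \<Rightarrow> (nat \<Rightarrow> 'a::field) \<Rightarrow> 'a mat" where
  "toeplitz_mat n f = mat n n (\<lambda>(i, j). if i \<le> j then f (j - i) else 0)"

lemma toeplitz_mat_in_KX: "toeplitz_mat n f \<in> KX n"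
proof -
  have "toeplitz_mat n (\<lambda>d. if d < m then f d else 0) \<in> KX n" for m
  proof (induction m)
    case 0
    have "toeplitz_mat n (\<lambda>d. if d < 0 then f d else 0) = 0 \<cdot>\<^sub>m 1\<^sub>m n"
      by (rule eq_matI) (auto simp: toeplitz_mat_def)
    then show ?case using KX.one KX.smult by metis
  next
    case (Suc m)
    have "toeplitz_mat n (\<lambda>d. if d < Suc m then f d else 0)
        = toeplitz_mat n (\<lambda>d. if d < m then f d else 0) + f m \<cdot>\<^sub>m (shift_mat n ^\<^sub>m m)"
      by (rule eq_matI)
        (auto simp del: pow_mat_dim simp: toeplitz_mat_def index_shift_mat_pow less_Suc_eq)
    then show ?case using Suc.IH KX_pow[OF KX.gen] KX.add KX.smult by metis
  qed
  moreover have "toeplitz_mat n f = toeplitz_mat n (\<lambda>d. if d < n then f d else 0)"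
    by (rule eq_matI) (auto simp: toeplitz_mat_def)
  ultimately show ?thesis by metis
qed

lemma commutes_shift_mat_imp_toeplitz:
  assumes M: "M \<in> carrier_mat n n" and comm: "M * shift_mat n = shift_mat n * M"
  shows "M = toeplitz_mat n (\<lambda>d. M $$ (0, d))"
proof -
  have "M $$ (i, j) = (if i \<le> j then M $$ (0, j - i) else 0)" if "i < n" "j < n" for i j
    using that
  proof (induction i arbitrary: j)
    case 0
    then show ?case by simp
  next
    case (Suc i)
    have "M $$ (Suc i, j) = (M * shift_mat n) $$ (i, j)"
      using index_mult_shift_mat_left[OF M, of i j] Suc.prems comm by simp
    also have "\<dots> = (if j = 0 then 0 else M $$ (i, j - 1))"
      using index_mult_shift_mat_right[OF M, of i j] Suc.prems by simp
    finally show ?case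
      using Suc.IH[of "j - 1"] Suc.prems by auto
  qed
  then show ?thesis
    using M by (intro eq_matI) (auto simp: toeplitz_mat_def)
qed

lemma KX_iff_commutes_shift_mat:
  "M \<in> KX n \<longleftrightarrow> M \<in> carrier_mat n n \<and> M * shift_mat n = shift_mat n * M"
  using KX_carrier KX_commutes_shift_mat commutes_shift_mat_imp_toeplitz toeplitz_mat_in_KX
  by metis

lemma index_toeplitz_mat [simp]:
  "i < n \<Longrightarrow> j < n \<Longrightarrow> toeplitz_mat n f $$ (i, j) = (if i \<le> j then f (j - i) else 0)"
  unfolding toeplitz_mat_def by simp

lemma KX_index:
  assumes M: "M \<in> KX n" and "i < n" and "j < n"
  shows "M $$ (i, j) = (if i \<le> j then M $$ (0, j - i) else 0)"
proof -
  have "M = toeplitz_mat n (\<lambda>d. M $$ (0, d))"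
    using M KX_carrier KX_commutes_shift_mat commutes_shift_mat_imp_toeplitz by blast
  then have "M $$ (i, j) = toeplitz_mat n (\<lambda>d. M $$ (0, d)) $$ (i, j)"
    by (rule arg_cong[where f = "\<lambda>A. A $$ (i, j)"])
  then show ?thesis
    using assms(2,3) by simp
qed

lemma KX_eqI:
  assumes M: "M \<in> KX n" and N: "N \<in> KX n" and first_row: "\<And>d. d < n \<Longrightarrow> M $$ (0, d) = N $$ (0, d)"
  shows "M = N"
proof (rule eq_matI)
  fix i j
  assume "i < dim_row N" and "j < dim_col N"
  then have i: "i < n" and j: "j < n"
    using KX_carrier[OF N] by auto
  have "M $$ (i, j) = (if i \<le> j then M $$ (0, j - i) else 0)"
    by (rule KX_index[OF M i j])
  also have "\<dots> = (if i \<le> j then N $$ (0, j - i) else 0)"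
    using first_row j by auto
  also have "\<dots> = N $$ (i, j)"
    by (rule KX_index[OF N i j, symmetric])
  finally show "M $$ (i, j) = N $$ (i, j)" .
next
  show "dim_row M = dim_row N" and "dim_col M = dim_col N"
    using KX_carrier[OF M] KX_carrier[OF N] by auto
qed

subsection \<open>Products in \<open>K[X]\<close> via the first row\<close>

lemma index_mult_KX_first_row:
  assumes M: "M \<in> KX n" and N: "N \<in> KX n" and d: "d < n"
  shows "(M * N) $$ (0, d) = (\<Sum>l\<le>d. M $$ (0, l) * N $$ (0, d - l))"
proof -
  have "(M * N) $$ (0, d) = (\<Sum>l<n. M $$ (0, l) * N $$ (l, d))"
    using KX_carrier[OF M] KX_carrier[OF N] d by (simp add: scalar_prod_def atLeast0LessThan)
  also have "\<dots> = (\<Sum>l<n. if l \<le> d then M $$ (0, l) * N $$ (0, d - l) else 0)"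
    using d by (intro sum.cong) (auto simp: KX_index[OF N, of _ d])
  also have "\<dots> = (\<Sum>l\<in>{..<n} \<inter> {..d}. M $$ (0, l) * N $$ (0, d - l))"
    by (simp add: sum.inter_restrict)
  also have "{..<n} \<inter> {..d} = {..d}"
    using d by auto
  finally show ?thesis .
qed

lemma zero_mat_in_KX: "0\<^sub>m n n \<in> KX n"
  by (simp add: KX_iff_commutes_shift_mat)

lemma index_mult_KX_00:
  "M \<in> KX n \<Longrightarrow> N \<in> KX n \<Longrightarrow> 0 < n \<Longrightarrow> (M * N) $$ (0, 0) = M $$ (0, 0) * N $$ (0, 0)"
  using index_mult_KX_first_row[of M n N 0] by simp

lemma index_mult_KX_01:
  "M \<in> KX n \<Longrightarrow> N \<in> KX n \<Longrightarrow> 1 < n \<Longrightarrow>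
    (M * N) $$ (0, 1) = M $$ (0, 0) * N $$ (0, 1) + M $$ (0, 1) * N $$ (0, 0)"
  using index_mult_KX_first_row[of M n N 1] by (simp add: atMost_Suc)

lemma KX_pow_index_00:
  assumes M: "M \<in> KX n" and n: "0 < n"
  shows "(M ^\<^sub>m k) $$ (0, 0) = M $$ (0, 0) ^ k"
proof (induction k)
  case 0
  then show ?case using n KX_carrier[OF M] by simp
next
  case (Suc k)
  then show ?case
    using index_mult_KX_00[OF KX_pow[OF M] M n] by simp
qed

lemma KX_pow_first_row:
  assumes M: "M \<in> KX n" and M00: "M $$ (0, 0) = 0" and d: "d < n" "d \<le> k"
  shows "(M ^\<^sub>m k) $$ (0, d) = (if d = k then M $$ (0, 1) ^ k else 0)"
  using d
proof (induction k arbitrary: d)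
  case 0
  then show ?case using KX_carrier[OF M] by simp
next
  case (Suc k)
  have "(M ^\<^sub>m Suc k) $$ (0, d) = (\<Sum>l\<le>d. (M ^\<^sub>m k) $$ (0, l) * M $$ (0, d - l))"
    using index_mult_KX_first_row[OF KX_pow[OF M] M Suc.prems(1)] by simp
  also have "\<dots> = (\<Sum>l\<le>d. if l = k \<and> d = Suc k then M $$ (0, 1) ^ Suc k else 0)"
  proof (rule sum.cong[OF refl])
    fix l
    assume "l \<in> {..d}"
    then consider "l \<le> k" | "l = d" "d = Suc k"
      using Suc.prems by fastforce
    then show "(M ^\<^sub>m k) $$ (0, l) * M $$ (0, d - l)
        = (if l = k \<and> d = Suc k then M $$ (0, 1) ^ Suc k else 0)"
    proof cases
      case 1
      then show ?thesis
        using Suc.IH[of l] Suc.prems \<open>l \<in> {..d}\<close> M00 by (auto simp: le_Suc_eq)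
    next
      case 2
      then show ?thesis using M00 by simp
    qed
  qed
  also have "\<dots> = (if d = Suc k then M $$ (0, 1) ^ Suc k else 0)"
    using Suc.prems by (cases "d = Suc k") auto
  finally show ?case .
qed

lemma KX_pow_dim_eq_zero:
  assumes M: "M \<in> KX n" and M00: "M $$ (0, 0) = 0"
  shows "M ^\<^sub>m n = 0\<^sub>m n n"
  by (rule KX_eqI[OF KX_pow[OF M] zero_mat_in_KX]) (simp add: KX_pow_first_row[OF M M00])

subsection \<open>The Krylov matrix of a nilpotent element of \<open>K[X]\<close>\<close>

text \<open>Column \<open>j\<close> is \<open>Y\<^sup>n\<^sup>-\<^sup>1\<^sup>-\<^sup>j e\<^sub>n\<^sub>-\<^sub>1\<close>; since \<open>X\<close> maps
  \<open>e\<^sub>j\<close> to \<open>e\<^sub>j\<^sub>-\<^sub>1\<close>, this matrix intertwines \<open>X\<close> with \<open>Y\<close> once \<open>Y\<^sup>n = 0\<close>.\<close>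

definition krylov_mat :: "nat \<Rightarrow> 'a::field mat \<Rightarrow> 'a mat" where
  "krylov_mat n Y = mat n n (\<lambda>(i, j). (Y ^\<^sub>m (n - 1 - j)) $$ (i, n - 1))"

lemma krylov_mat_carrier [simp]: "krylov_mat n Y \<in> carrier_mat n n"
  unfolding krylov_mat_def by simp

lemma dim_krylov_mat [simp]: "dim_row (krylov_mat n Y) = n" "dim_col (krylov_mat n Y) = n"
  unfolding krylov_mat_def by simp_all

lemma index_krylov_mat:
  assumes "Y \<in> KX n" and "i < n" and "j < n"
  shows "krylov_mat n Y $$ (i, j) = (Y ^\<^sub>m (n - 1 - j)) $$ (0, n - 1 - i)"
  using assms KX_index[OF KX_pow[OF assms(1)], of i "n - 1" "n - 1 - j"]
  unfolding krylov_mat_def by simp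

lemma upper_triangular_krylov_mat:
  assumes Y: "Y \<in> KX n" and Y00: "Y $$ (0, 0) = 0"
  shows "upper_triangular (krylov_mat n Y)"
  using index_krylov_mat[OF Y] KX_pow_first_row[OF Y Y00] by (intro upper_triangularI) auto

lemma det_krylov_mat_nonzero:
  assumes Y: "Y \<in> KX n" and Y00: "Y $$ (0, 0) = 0" and Y01: "Y $$ (0, 1) \<noteq> 0"
  shows "det (krylov_mat n Y) \<noteq> 0"
proof -
  have "det (krylov_mat n Y) = (\<Prod>j = 0..<n. krylov_mat n Y $$ (j, j))"
    using det_upper_triangular[OF upper_triangular_krylov_mat[OF Y Y00] krylov_mat_carrier]
    by (simp add: prod_list_diag_prod)
  also have "\<dots> = (\<Prod>j = 0..<n. Y $$ (0, 1) ^ (n - 1 - j))"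
    using index_krylov_mat[OF Y] KX_pow_first_row[OF Y Y00] by (intro prod.cong) auto
  finally show ?thesis
    using Y01 by simp
qed

lemma col_krylov_mat:
  assumes "Y \<in> carrier_mat n n" and "j < n"
  shows "col (krylov_mat n Y) j = col (Y ^\<^sub>m (n - 1 - j)) (n - 1)"
  using assms by (intro eq_vecI) (auto simp: krylov_mat_def)

lemma col_krylov_mat_last:
  assumes "Y \<in> carrier_mat n n" and "0 < n"
  shows "col (krylov_mat n Y) (n - 1) = unit_vec n (n - 1)"
  using col_krylov_mat[OF assms(1), of "n - 1"] assms by simp

lemma krylov_mat_mult_shift_mat:
  assumes Y: "Y \<in> KX n" and Y00: "Y $$ (0, 0) = 0"
  shows "krylov_mat n Y * shift_mat n = Y * krylov_mat n Y"
proof (rule eq_matI)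
  fix i j
  assume "i < dim_row (Y * krylov_mat n Y)" and "j < dim_col (Y * krylov_mat n Y)"
  then have i: "i < n" and j: "j < n"
    using KX_carrier[OF Y] by auto
  have Yc: "Y \<in> carrier_mat n n"
    using KX_carrier[OF Y] .
  have "(Y * krylov_mat n Y) $$ (i, j) = row Y i \<bullet> col (Y ^\<^sub>m (n - 1 - j)) (n - 1)"
    using i j Yc by (simp add: col_krylov_mat)
  also have "\<dots> = (Y * Y ^\<^sub>m (n - 1 - j)) $$ (i, n - 1)"
    using i Yc by simp
  also have "\<dots> = (Y ^\<^sub>m (n - j)) $$ (i, n - 1)"
    using j pow_mat_Suc_left[OF Yc, of "n - 1 - j"] by (simp add: Suc_diff_Suc)
  also have "\<dots> = (krylov_mat n Y * shift_mat n) $$ (i, j)"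
    using index_mult_shift_mat_right[OF krylov_mat_carrier i j] KX_pow_dim_eq_zero[OF Y Y00] i j
    by (cases j) (auto simp: krylov_mat_def)
  finally show "(krylov_mat n Y * shift_mat n) $$ (i, j) = (Y * krylov_mat n Y) $$ (i, j)"
    by simp
qed (use KX_carrier[OF Y] in auto)

lemma det_nonzero_imp_inverse:
  assumes "A \<in> carrier_mat n n" and "det A \<noteq> (0::'a::field)"
  obtains B where "B \<in> carrier_mat n n" and "A * B = 1\<^sub>m n" and "B * A = 1\<^sub>m n"
  using det_non_zero_imp_unit[OF assms, of "()"] that
  unfolding Units_def ring_mat_def by auto

lemma KX_hom_eq_conj:
  assumes additive: "\<And>Y Z. Y \<in> KX n \<Longrightarrow> Z \<in> KX n \<Longrightarrow> \<phi> (Y + Z) = \<phi> Y + \<phi> Z"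
    and homogeneous: "\<And>c Y. Y \<in> KX n \<Longrightarrow> \<phi> (c \<cdot>\<^sub>m Y) = c \<cdot>\<^sub>m \<phi> Y"
    and multiplicative: "\<And>Y Z. Y \<in> KX n \<Longrightarrow> Z \<in> KX n \<Longrightarrow> \<phi> (Y * Z) = \<phi> Y * \<phi> Z"
    and unital: "\<phi> (1\<^sub>m n) = 1\<^sub>m n"
    and A: "A \<in> carrier_mat n n" and B: "B \<in> carrier_mat n n"
    and AB: "A * B = 1\<^sub>m n" and BA: "B * A = 1\<^sub>m n"
    and generator: "\<phi> (shift_mat n) = A * shift_mat n * B"
    and Z: "Z \<in> KX n"
  shows "\<phi> Z = A * Z * B"
  using Z
proof (induction rule: KX.induct)
  case gen
  then show ?case using generator .
next
  case one
  then show ?case using A AB unital by simp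
next
  case (add Y Z)
  have "Y \<in> carrier_mat n n" "Z \<in> carrier_mat n n"
    using add.hyps KX_carrier by auto
  then have "A * (Y + Z) * B = A * Y * B + A * Z * B"
    using A B by (simp add: mult_add_distrib_mat[of _ n n _ n] add_mult_distrib_mat[of _ n n _ _ n])
  then show ?case using add additive by simp
next
  case (smult Y c)
  have "Y \<in> carrier_mat n n"
    using smult.hyps KX_carrier by auto
  then have "A * (c \<cdot>\<^sub>m Y) * B = c \<cdot>\<^sub>m (A * Y * B)"
    using A B by (simp add: mult_smult_distrib[of _ n n _ n] mult_smult_assoc_mat[of _ n n _ n])
  then show ?case using smult homogeneous by simp
next
  case (mult Y Z)
  have Y: "Y \<in> carrier_mat n n" and Z: "Z \<in> carrier_mat n n"
    using mult.hyps KX_carrier by auto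
  have "(A * Y * B) * (A * Z * B) = A * Y * (B * (A * Z * B))"
    using A B Y Z by (simp add: assoc_mult_mat[of _ n n _ n _ n])
  also have "B * (A * Z * B) = (B * A) * (Z * B)"
    using A B Z by (simp add: assoc_mult_mat[of _ n n _ n _ n])
  also have "\<dots> = Z * B"
    using BA Z B by simp
  also have "A * Y * (Z * B) = A * (Y * Z) * B"
    using A B Y Z by (simp add: assoc_mult_mat[of _ n n _ n _ n])
  finally show ?case
    using mult multiplicative by simp
qed

context
  fixes n :: nat and \<phi> :: "'a::field mat \<Rightarrow> 'a mat"
  assumes aut: "KX_automorphism n \<phi>"
begin

lemma KX_aut_closed: "Z \<in> KX n \<Longrightarrow> \<phi> Z \<in> KX n"
  using aut unfolding KX_automorphism_def by (meson bij_betw_apply)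

lemma KX_aut_surj: "Z \<in> KX n \<Longrightarrow> \<exists>W\<in>KX n. \<phi> W = Z"
  using aut unfolding KX_automorphism_def bij_betw_def by (metis imageE)

lemma KX_aut_add: "Y \<in> KX n \<Longrightarrow> Z \<in> KX n \<Longrightarrow> \<phi> (Y + Z) = \<phi> Y + \<phi> Z"
  and KX_aut_smult: "Y \<in> KX n \<Longrightarrow> \<phi> (c \<cdot>\<^sub>m Y) = c \<cdot>\<^sub>m \<phi> Y"
  and KX_aut_mult: "Y \<in> KX n \<Longrightarrow> Z \<in> KX n \<Longrightarrow> \<phi> (Y * Z) = \<phi> Y * \<phi> Z"
  and KX_aut_one: "\<phi> (1\<^sub>m n) = 1\<^sub>m n"
  using aut unfolding KX_automorphism_def by blast+

lemma KX_aut_pow: "Z \<in> KX n \<Longrightarrow> \<phi> (Z ^\<^sub>m k) = \<phi> Z ^\<^sub>m k"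
proof (induction k)
  case 0
  then show ?case
    using KX_aut_one KX_carrier[OF 0] KX_carrier[OF KX_aut_closed[OF 0]] by simp
next
  case (Suc k)
  then show ?case
    using KX_aut_mult[OF KX_pow[OF Suc.prems] Suc.prems] by simp
qed

lemma KX_aut_zero: "\<phi> (0\<^sub>m n n) = 0\<^sub>m n n"
proof -
  have "\<phi> (0 \<cdot>\<^sub>m 1\<^sub>m n) = 0 \<cdot>\<^sub>m 1\<^sub>m n"
    using KX_aut_smult[OF KX.one] KX_aut_one by simp
  moreover have "0 \<cdot>\<^sub>m 1\<^sub>m n = (0\<^sub>m n n :: 'a mat)"
    by auto
  ultimately show ?thesis by simp
qed

lemma KX_aut_shift_00:
  assumes "0 < n"
  shows "\<phi> (shift_mat n) $$ (0, 0) = 0"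
proof -
  let ?Y = "\<phi> (shift_mat n)"
  have "shift_mat n ^\<^sub>m n = (0\<^sub>m n n :: 'a mat)"
    by (rule KX_pow_dim_eq_zero[OF KX.gen]) (simp add: index_shift_mat assms)
  then have "?Y ^\<^sub>m n = 0\<^sub>m n n"
    using KX_aut_pow[OF KX.gen, of n] KX_aut_zero by simp
  then have "?Y $$ (0, 0) ^ n = 0"
    using KX_pow_index_00[OF KX_aut_closed[OF KX.gen] assms, of n] assms by simp
  then show ?thesis by simp
qed

text \<open>Modulo \<open>X\<^sup>2\<close>, \<open>\<phi>\<close> acts as \<open>a + b X \<mapsto> a + b c X\<close> with \<open>c\<close> the
  \<open>(0, 1)\<close> entry of \<open>\<phi> X\<close>; surjectivity then forces \<open>c \<noteq> 0\<close>.\<close>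

lemma KX_aut_index_01:
  assumes n: "2 \<le> n" and Z: "Z \<in> KX n"
  shows "\<phi> Z $$ (0, 0) = Z $$ (0, 0) \<and> \<phi> Z $$ (0, 1) = Z $$ (0, 1) * \<phi> (shift_mat n) $$ (0, 1)"
  using Z
proof (induction rule: KX.induct)
  case gen
  then show ?case using KX_aut_shift_00 n by (simp add: index_shift_mat)
next
  case one
  then show ?case using KX_aut_one n by simp
next
  case (add Y Z)
  have "\<phi> (Y + Z) = \<phi> Y + \<phi> Z"
    using KX_aut_add add.hyps by blast
  moreover have "\<phi> Y \<in> carrier_mat n n" "\<phi> Z \<in> carrier_mat n n" "Y \<in> carrier_mat n n" "Z \<in> carrier_mat n n"
    using add.hyps KX_aut_closed KX_carrier by blast+
  ultimately show ?case
    using add.IH n by (simp add: distrib_right)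
next
  case (smult Y c)
  have "\<phi> (c \<cdot>\<^sub>m Y) = c \<cdot>\<^sub>m \<phi> Y"
    using KX_aut_smult smult.hyps by blast
  moreover have "\<phi> Y \<in> carrier_mat n n" "Y \<in> carrier_mat n n"
    using smult.hyps KX_aut_closed KX_carrier by blast+
  ultimately show ?case
    using smult.IH n by simp
next
  case (mult Y Z)
  have "\<phi> (Y * Z) = \<phi> Y * \<phi> Z"
    using KX_aut_mult mult.hyps by blast
  with mult.IH n show ?case
    using index_mult_KX_00[OF KX_aut_closed[OF mult.hyps(1)] KX_aut_closed[OF mult.hyps(2)]]
      index_mult_KX_00[OF mult.hyps] index_mult_KX_01[OF mult.hyps]
      index_mult_KX_01[OF KX_aut_closed[OF mult.hyps(1)] KX_aut_closed[OF mult.hyps(2)]]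
    by (simp add: algebra_simps)
qed

lemma KX_aut_shift_01:
  assumes "2 \<le> n"
  shows "\<phi> (shift_mat n) $$ (0, 1) \<noteq> 0"
proof -
  obtain W where "W \<in> KX n" and "\<phi> W = shift_mat n"
    using KX_aut_surj[OF KX.gen] by blast
  moreover have "shift_mat n $$ (0, 1) = (1::'a)"
    using assms by (simp add: index_shift_mat)
  ultimately show ?thesis
    using KX_aut_index_01[OF assms] by force
qed

lemma KX_aut_induced_by_krylov_mat:
  assumes n: "2 \<le> n"
  shows "induces_by_conj n \<phi> (krylov_mat n (\<phi> (shift_mat n)))"
proof -
  let ?Y = "\<phi> (shift_mat n)" and ?A = "krylov_mat n (\<phi> (shift_mat n))"
  have Y: "?Y \<in> KX n" and Y00: "?Y $$ (0, 0) = 0"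
    using KX_aut_closed[OF KX.gen] KX_aut_shift_00 n by auto
  obtain B where B: "B \<in> carrier_mat n n" and AB: "?A * B = 1\<^sub>m n" and BA: "B * ?A = 1\<^sub>m n"
    using det_nonzero_imp_inverse[OF krylov_mat_carrier det_krylov_mat_nonzero[OF Y Y00 KX_aut_shift_01[OF n]]] .
  have "?A * shift_mat n * B = ?Y * (?A * B)"
    using krylov_mat_mult_shift_mat[OF Y Y00] KX_carrier[OF Y] B
    by (simp add: assoc_mult_mat[of _ n n _ n _ n])
  then have "\<phi> (shift_mat n) = ?A * shift_mat n * B"
    using AB KX_carrier[OF Y] by simp
  then have "\<forall>Z\<in>KX n. \<phi> Z = ?A * Z * B"
    using KX_hom_eq_conj[OF KX_aut_add KX_aut_smult KX_aut_mult KX_aut_one krylov_mat_carrier B AB BA]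
    by blast
  moreover have "invertible_mat ?A"
    using B AB BA unfolding invertible_mat_def inverts_mat_def by auto
  ultimately show ?thesis
    unfolding induces_by_conj_def using B AB BA by auto
qed

end

subsection \<open>Uniqueness of the conjugating matrix\<close>

lemma induces_by_conj_left_inverse_mult_in_KX:
  assumes A1: "induces_by_conj n \<phi> A1" and A2: "induces_by_conj n \<phi> A2"
    and B: "B \<in> carrier_mat n n" and BA1: "B * A1 = 1\<^sub>m n"
  shows "B * A2 \<in> KX n"
proof -
  let ?X = "shift_mat n"
  obtain B1 where A1c: "A1 \<in> carrier_mat n n" and B1: "B1 \<in> carrier_mat n n"
    and A1B1: "A1 * B1 = 1\<^sub>m n" and conj1: "\<phi> ?X = A1 * ?X * B1"
    using A1 KX.gen unfolding induces_by_conj_def by blast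
  obtain B2 where A2c: "A2 \<in> carrier_mat n n" and B2: "B2 \<in> carrier_mat n n"
    and B2A2: "B2 * A2 = 1\<^sub>m n" and conj2: "\<phi> ?X = A2 * ?X * B2"
    using A2 KX.gen unfolding induces_by_conj_def by blast
  have "B = B * (A1 * B1)"
    using A1B1 B by simp
  also have "\<dots> = (B * A1) * B1"
    using A1c B B1 by (simp add: assoc_mult_mat[of _ n n _ n _ n])
  finally have B1_eq: "B1 = B"
    using BA1 B1 by simp
  have "B * A2 * ?X = B * (A2 * ?X * (B2 * A2))"
    using A2c B B2A2 by (simp add: assoc_mult_mat[of _ n n _ n _ n])
  also have "\<dots> = B * (A2 * ?X * B2) * A2"
    using A2c B B2 by (simp add: assoc_mult_mat[of _ n n _ n _ n])
  also have "\<dots> = B * (A1 * ?X * B1) * A2"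
    using conj1 conj2 by simp
  also have "\<dots> = (B * A1) * ?X * (B1 * A2)"
    using A1c A2c B B1 by (simp add: assoc_mult_mat[of _ n n _ n _ n])
  finally have "B * A2 * ?X = ?X * (B * A2)"
    using BA1 B A2c B1_eq by simp
  then show ?thesis
    using B A2c by (simp add: KX_iff_commutes_shift_mat)
qed

lemma induces_by_conj_eq_mult_KX_unit:
  assumes A: "induces_by_conj n \<phi> A" and B: "induces_by_conj n \<phi> B"
  shows "\<exists>C. KX_unit n C \<and> B = A * C"
proof -
  obtain A' where Ac: "A \<in> carrier_mat n n" and A': "A' \<in> carrier_mat n n"
    and AA': "A * A' = 1\<^sub>m n" and A'A: "A' * A = 1\<^sub>m n"
    using A unfolding induces_by_conj_def by blast
  obtain B' where Bc: "B \<in> carrier_mat n n" and B': "B' \<in> carrier_mat n n"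
    and BB': "B * B' = 1\<^sub>m n" and B'B: "B' * B = 1\<^sub>m n"
    using B unfolding induces_by_conj_def by blast
  have "(A' * B) * (B' * A) = A' * (B * B') * A" and "(B' * A) * (A' * B) = B' * (A * A') * B"
    using Ac A' Bc B' by (simp_all add: assoc_mult_mat[of _ n n _ n _ n])
  then have "KX_unit n (A' * B)"
    using A'A B'B induces_by_conj_left_inverse_mult_in_KX[OF A B A' A'A]
      induces_by_conj_left_inverse_mult_in_KX[OF B A B' B'B] A' B' AA' BB'
    unfolding KX_unit_def by auto
  moreover have "A * (A' * B) = B"
    using Ac A' Bc AA' by (simp add: assoc_mult_mat[of _ n n _ n _ n, symmetric])
  ultimately show ?thesis by metis
qed

text \<open>Two normalized matrices differ by a unit \<open>C\<close> of \<open>K[X]\<close> fixing \<open>e\<^sub>n\<^sub>-\<^sub>1\<close>;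
  as \<open>C\<close> is Toeplitz, its last column is its reversed first row, so \<open>C = 1\<close>.\<close>

lemma induces_by_conj_unique_last_col:
  assumes A: "induces_by_conj n \<phi> A" and B: "induces_by_conj n \<phi> B"
    and colA: "col A (n - 1) = unit_vec n (n - 1)" and colB: "col B (n - 1) = unit_vec n (n - 1)"
    and n: "0 < n"
  shows "A = B"
proof -
  obtain A' where Ac: "A \<in> carrier_mat n n" and A': "A' \<in> carrier_mat n n"
    and AA': "A * A' = 1\<^sub>m n" and A'A: "A' * A = 1\<^sub>m n"
    using A unfolding induces_by_conj_def by blast
  have Bc: "B \<in> carrier_mat n n"
    using B unfolding induces_by_conj_def by blast
  define C where "C = A' * B"
  have C: "C \<in> KX n"
    unfolding C_def using induces_by_conj_left_inverse_mult_in_KX[OF A B A' A'A] .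
  have C_last_col: "C $$ (i, n - 1) = 1\<^sub>m n $$ (i, n - 1)" if i: "i < n" for i
  proof -
    have "C $$ (i, n - 1) = row A' i \<bullet> col A (n - 1)"
      using i n A' Bc colA colB unfolding C_def by simp
    also have "\<dots> = (A' * A) $$ (i, n - 1)"
      using i n A' Ac by simp
    finally show ?thesis
      using A'A by simp
  qed
  have "C = 1\<^sub>m n"
  proof (rule KX_eqI[OF C KX.one])
    fix d
    assume d: "d < n"
    have "C $$ (n - 1 - d, n - 1) = C $$ (0, d)"
      using KX_index[OF C, of "n - 1 - d" "n - 1"] d by (simp add: diff_diff_cancel)
    then show "C $$ (0, d) = 1\<^sub>m n $$ (0, d)"
      using C_last_col[of "n - 1 - d"] d by auto
  qed
  moreover have "A * C = B"
    unfolding C_def using Ac A' Bc AA' by (simp add: assoc_mult_mat[of _ n n _ n _ n, symmetric])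
  ultimately show ?thesis
    using Ac by simp
qed

theorem lemma3p3:
  fixes \<phi> :: "'a::field mat \<Rightarrow> 'a mat" and p s n :: nat
  assumes "CHAR('a) = p" and "p > 0" and "s \<ge> 1" and "n = 1 + p ^ s"
    and "KX_automorphism n \<phi>"
  shows "(\<exists>A. upper_triangular A \<and> induces_by_conj n \<phi> A)
    \<and> (\<exists>!A. upper_triangular A \<and> induces_by_conj n \<phi> A \<and> col A (n - 1) = unit_vec n (n - 1))
    \<and> (\<forall>A B. upper_triangular A \<and> induces_by_conj n \<phi> A \<and> col A (n - 1) = unit_vec n (n - 1)
              \<and> induces_by_conj n \<phi> B \<longrightarrow> (\<exists>C. KX_unit n C \<and> B = A * C))"
proof -
  have n: "2 \<le> n"
    using assms(2,4) by simp
  let ?Y = "\<phi> (shift_mat n)"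
  let ?A = "krylov_mat n ?Y"
  have Y: "?Y \<in> KX n" and Y00: "?Y $$ (0, 0) = 0"
    using KX_aut_closed[OF assms(5) KX.gen] KX_aut_shift_00[OF assms(5)] n by auto
  have A: "upper_triangular ?A \<and> induces_by_conj n \<phi> ?A \<and> col ?A (n - 1) = unit_vec n (n - 1)"
    using upper_triangular_krylov_mat[OF Y Y00] KX_aut_induced_by_krylov_mat[OF assms(5) n]
      col_krylov_mat_last[OF KX_carrier[OF Y]] n by simp
  show ?thesis
  proof (intro conjI)
    show "\<exists>A. upper_triangular A \<and> induces_by_conj n \<phi> A"
      using A by blast
    show "\<exists>!A. upper_triangular A \<and> induces_by_conj n \<phi> A \<and> col A (n - 1) = unit_vec n (n - 1)"
      using A induces_by_conj_unique_last_col[of n \<phi> ?A] n by (intro ex1I[of _ ?A]) auto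
    show "\<forall>A B. upper_triangular A \<and> induces_by_conj n \<phi> A \<and> col A (n - 1) = unit_vec n (n - 1)
        \<and> induces_by_conj n \<phi> B \<longrightarrow> (\<exists>C. KX_unit n C \<and> B = A * C)"
      using induces_by_conj_eq_mult_KX_unit by blast
  qed
qed

end
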